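(* Every alternating $2$-regular partition $\lambda$ is obtained from the empty partition by a finite sequence of operations, each of which sends an alternating partition $\mu$ to an alternating partition and is of one of the following two types: (1) (widening) $\mu\mapsto \tilde f_\epsilon^{\,b(\mu)}\mu$ for some $\epsilon\in\{0,1\}$, where $b(\mu)$ is the number of nonzero parts of $\mu$; (2) (deepening) $\mu\mapsto s_\epsilon\mu$ for some $\epsilon\in\{0,1\}$, the action of the simple reflection $s_\epsilon$ on the crystal $B(\Lambda_0)$.
   Context: Setting (level one, $e=2$): $B(\Lambda_0)$ is the crystal of the basic representation of affine $A^{(1)}_1$ (simple roots $\alpha_0,\alpha_1$, coroots $h_0,h_1$), whose elements are labelled by $2$-regular (strict) partitions via the Misra–Miwa/Kleshchev realization, node $(x,y)$ (row $x$, column $y$) having residue $(y-x)\bmod 2$, with Kashiwara operators $\tilde e_i,\tilde f_i$. A $2$-regular partition is \emph{alternating} if the parities of consecutive nonzero parts alternate. The simple reflection acts on a crystal by $s_i b=\tilde f_i^{\,k}b$ if $k=\langle \mathrm{wt}(b),h_i\rangle\ge0$ and $s_ib=\tilde e_i^{\,-k}b$ if $k<0$. *)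

theory Defs
  imports Main
begin

text \<open>Partitions are lists of positive naturals in weakly decreasing order
  (parts listed from the top row). Rows and columns are 1-indexed:
  node (x,y) is in row x and column y.\<close>

definition is_partition :: "nat list \<Rightarrow> bool" where
  "is_partition lam \<longleftrightarrow> sorted_wrt (\<ge>) lam \<and> (\<forall>p\<in>set lam. 0 < p)"

definition two_regular :: "nat list \<Rightarrow> bool" where
  "two_regular lam \<longleftrightarrow> is_partition lam \<and> (\<forall>p\<in>set lam. count_list lam p < 2)"

definition alternating :: "nat list \<Rightarrow> bool" where
  "alternating lam \<longleftrightarrow> two_regular lam \<and>
     (\<forall>i. Suc i < length lam \<longrightarrow> odd (lam ! i) \<noteq> odd (lam ! Suc i))"

definition part :: "nat list \<Rightarrow> nat \<Rightarrow> nat" where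
  "part lam x = (if 1 \<le> x \<and> x \<le> length lam then lam ! (x - 1) else 0)"

definition res :: "nat \<Rightarrow> nat \<Rightarrow> nat" where
  "res x y = nat ((int y - int x) mod 2)"

definition addable :: "nat list \<Rightarrow> nat \<Rightarrow> bool" where
  "addable lam x \<longleftrightarrow> 1 \<le> x \<and> x \<le> length lam + 1 \<and> (x = 1 \<or> part lam x < part lam (x - 1))"

definition removable :: "nat list \<Rightarrow> nat \<Rightarrow> bool" where
  "removable lam x \<longleftrightarrow> 1 \<le> x \<and> x \<le> length lam \<and> part lam (x + 1) < part lam x"

definition addable_i :: "nat \<Rightarrow> nat list \<Rightarrow> nat \<Rightarrow> bool" where
  "addable_i i lam x \<longleftrightarrow> addable lam x \<and> res x (part lam x + 1) = i"

definition removable_i :: "nat \<Rightarrow> nat list \<Rightarrow> nat \<Rightarrow> bool" where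
  "removable_i i lam x \<longleftrightarrow> removable lam x \<and> res x (part lam x) = i"

text \<open>Kleshchev's normal / good removable nodes and conormal / cogood addable nodes
  (rows increase downwards; "above" means smaller row index).\<close>
definition normal :: "nat \<Rightarrow> nat list \<Rightarrow> nat \<Rightarrow> bool" where
  "normal i lam r \<longleftrightarrow> removable_i i lam r \<and>
     (\<forall>a<r. addable_i i lam a \<longrightarrow>
        card {x. a < x \<and> x < r \<and> addable_i i lam x} < card {x. a < x \<and> x < r \<and> removable_i i lam x})"

definition good :: "nat \<Rightarrow> nat list \<Rightarrow> nat \<Rightarrow> bool" where
  "good i lam r \<longleftrightarrow> normal i lam r \<and> (\<forall>r'. normal i lam r' \<longrightarrow> r' \<le> r)"

definition conormal :: "nat \<Rightarrow> nat list \<Rightarrow> nat \<Rightarrow> bool" where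
  "conormal i lam b \<longleftrightarrow> addable_i i lam b \<and>
     (\<forall>c>b. removable_i i lam c \<longrightarrow>
        card {x. b < x \<and> x < c \<and> removable_i i lam x} < card {x. b < x \<and> x < c \<and> addable_i i lam x})"

definition cogood :: "nat \<Rightarrow> nat list \<Rightarrow> nat \<Rightarrow> bool" where
  "cogood i lam b \<longleftrightarrow> conormal i lam b \<and> (\<forall>b'. conormal i lam b' \<longrightarrow> b \<le> b')"

definition add_node :: "nat list \<Rightarrow> nat \<Rightarrow> nat list" where
  "add_node lam x = (if x \<le> length lam then lam[x - 1 := lam ! (x - 1) + 1] else lam @ [1])"

definition remove_node :: "nat list \<Rightarrow> nat \<Rightarrow> nat list" where
  "remove_node lam x = filter (\<lambda>p. 0 < p) (lam[x - 1 := lam ! (x - 1) - 1])"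

text \<open>Kashiwara operators; None represents 0.\<close>
definition etil :: "nat \<Rightarrow> nat list \<Rightarrow> nat list option" where
  "etil i lam = (if \<exists>r. good i lam r then Some (remove_node lam (THE r. good i lam r)) else None)"

definition ftil :: "nat \<Rightarrow> nat list \<Rightarrow> nat list option" where
  "ftil i lam = (if \<exists>b. cogood i lam b then Some (add_node lam (THE b. cogood i lam b)) else None)"

fun epow :: "nat \<Rightarrow> nat \<Rightarrow> nat list \<Rightarrow> nat list option" where
  "epow i 0 lam = Some lam"
| "epow i (Suc k) lam = Option.bind (epow i k lam) (etil i)"

fun fpow :: "nat \<Rightarrow> nat \<Rightarrow> nat list \<Rightarrow> nat list option" where
  "fpow i 0 lam = Some lam"
| "fpow i (Suc k) lam = Option.bind (fpow i k lam) (ftil i)"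

definition nres :: "nat \<Rightarrow> nat list \<Rightarrow> nat" where
  "nres i lam = card {(x, y). 1 \<le> x \<and> x \<le> length lam \<and> 1 \<le> y \<and> y \<le> part lam x \<and> res x y = i}"

text \<open>wt(lam) = Lambda_0 - sum of alpha_(res) over nodes; pairing with h_i in type A_1^(1)
  (Cartan matrix [[2,-2],[-2,2]]).\<close>
definition hval :: "nat \<Rightarrow> nat list \<Rightarrow> int" where
  "hval i lam = (if i = 0 then 1 else 0) - 2 * int (nres i lam) + 2 * int (nres (1 - i) lam)"

definition sref :: "nat \<Rightarrow> nat list \<Rightarrow> nat list option" where
  "sref i lam = (let k = hval i lam in if 0 \<le> k then fpow i (nat k) lam else epow i (nat (- k)) lam)"

definition alt_step :: "nat list \<Rightarrow> nat list \<Rightarrow> bool" where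
  "alt_step mu nu \<longleftrightarrow> alternating mu \<and> alternating nu \<and>
     (\<exists>eps\<in>{0,1}. fpow eps (length mu) mu = Some nu \<or> sref eps mu = Some nu)"

end

theory Submission
  imports Defs
begin

text \<open>
  Induct on the size of \<open>\<lambda>\<close>. Deleting the first column of an alternating \<open>\<lambda>\<close> (and, if its
  last part is 1, the last row as well) leaves an alternating \<open>\<mu>\<close>. In an alternating \<open>\<mu>\<close> the
  addable nodes at the ends of all rows share one residue \<open>\<epsilon>\<close>, while every removable node has
  residue \<open>1 - \<epsilon>\<close>; hence by the signature rule \<open>f\<^sub>\<epsilon>\<close> adds these nodes one row at a time
  from the top, and \<open>f\<^sub>\<epsilon>\<^bsup>b(\<mu>)\<^esup> \<mu> = \<lambda>\<close> in the first case. In the second case the last part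
  of \<open>\<mu>\<close> is odd, so the first node of the new row \<open>b(\<mu>) + 1\<close> is an addable \<open>\<epsilon>\<close>-node as well,
  and counting residues row by row gives \<open>\<langle>wt \<mu>, h\<^sub>\<epsilon>\<rangle> = b(\<mu>) + 1\<close>, so
  \<open>s\<^sub>\<epsilon> \<mu> = f\<^sub>\<epsilon>\<^bsup>b(\<mu>)+1\<^esup> \<mu> = \<lambda>\<close>.
\<close>

lemma res_eq: "res x y = (x + y) mod 2"
proof -
  have "(int y - int x) mod 2 = (int y + int x + (- int x) * 2) mod 2"
    by simp
  also have "\<dots> = int ((x + y) mod 2)"
    by (simp only: mod_mult_self1) (simp add: zmod_int add.commute)
  finally show ?thesis
    unfolding res_def by simp
qed

lemma res_Suc: "res x (Suc y) = 1 - res x y"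
  unfolding res_eq by presburger

lemma res_Suc_neq: "res x (Suc y) \<noteq> res x y"
  unfolding res_eq by presburger

lemma distinct_iff_count_list_less_2: "distinct xs \<longleftrightarrow> (\<forall>x\<in>set xs. count_list xs x < 2)"
  by (induction xs) (auto simp: count_list_0_iff)

lemma two_regular_iff: "two_regular lam \<longleftrightarrow> sorted_wrt (>) lam \<and> (\<forall>p\<in>set lam. 0 < p)"
proof -
  have "sorted_wrt (>) lam \<longleftrightarrow> sorted_wrt (\<ge>) lam \<and> distinct lam"
    by (induction lam) (auto simp: order.strict_iff_order)
  then show ?thesis
    unfolding two_regular_def is_partition_def distinct_iff_count_list_less_2 by blast
qed

lemma alternating_iff:
  "alternating lam \<longleftrightarrow> sorted_wrt (>) lam \<and> (\<forall>p\<in>set lam. 0 < p) \<and>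
     (\<forall>i. Suc i < length lam \<longrightarrow> odd (lam ! i) \<noteq> odd (lam ! Suc i))"
  unfolding alternating_def two_regular_iff by blast

lemma alternating_parity:
  assumes "alternating lam" "j < length lam"
  shows "odd (lam ! j) \<longleftrightarrow> odd (lam ! 0 + j)"
  using assms(2)
proof (induction j)
  case (Suc j)
  then show ?case using assms(1) unfolding alternating_def by auto
qed simp

lemma alternating_butlast: "alternating lam \<Longrightarrow> alternating (butlast lam)"
  unfolding alternating_iff butlast_conv_take
  by (auto simp: sorted_wrt_take dest: in_set_takeD)

lemma alternating_map_pred:
  assumes "alternating lam" "\<forall>p\<in>set lam. 2 \<le> p"
  shows "alternating (map (\<lambda>p. p - 1) lam)"
proof -
  have "sorted_wrt (>) (map (\<lambda>p. p - 1) lam)"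
    using assms unfolding alternating_iff sorted_wrt_map
    by (auto elim!: sorted_wrt_mono_rel[rotated])
  moreover have "odd (lam ! i - 1) \<noteq> odd (lam ! Suc i - 1)" if "Suc i < length lam" for i
    using assms that nth_mem[of i lam] nth_mem[of "Suc i" lam] unfolding alternating_iff
    by (auto simp: odd_pos even_diff_nat)
  ultimately show ?thesis
    using assms(2) unfolding alternating_iff by auto
qed

text \<open>The colour \<open>\<epsilon>\<close> of both operations: in an alternating partition every row ends in an
  addable node of this residue.\<close>

definition end_residue :: "nat list \<Rightarrow> nat" where
  "end_residue lam = res 1 (part lam 1 + 1)"

lemma end_residue_cases: "end_residue lam \<in> {0, 1}"
  unfolding end_residue_def res_eq by auto

definition row_ends_residue :: "nat \<Rightarrow> nat list \<Rightarrow> bool" where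
  "row_ends_residue i lam \<longleftrightarrow> (\<forall>x. 1 \<le> x \<longrightarrow> x \<le> length lam \<longrightarrow> res x (part lam x + 1) = i)"

lemma alternating_row_ends_residue:
  assumes "alternating lam"
  shows "row_ends_residue (end_residue lam) lam"
  unfolding row_ends_residue_def end_residue_def
proof (intro allI impI)
  fix x assume x: "1 \<le> x" "x \<le> length lam"
  then have "odd (lam ! (x - 1)) \<longleftrightarrow> odd (lam ! 0 + (x - 1))"
    using alternating_parity[OF assms] by simp
  then show "res x (part lam x + 1) = res 1 (part lam 1 + 1)"
    using x by (simp add: part_def res_eq) presburger
qed

lemma alternating_addable_i:
  assumes "alternating lam" "k < length lam"
  shows "addable_i (end_residue lam) lam (Suc k)"
proof -
  have "k = 0 \<or> lam ! k < lam ! (k - 1)"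
    using assms unfolding alternating_iff by (cases k) (auto simp: sorted_wrt_iff_nth_less)
  then have "addable lam (Suc k)"
    using assms(2) unfolding addable_def part_def by auto
  then show ?thesis
    using alternating_row_ends_residue[OF assms(1)] assms(2)
    unfolding addable_i_def row_ends_residue_def by simp
qed

lemma part_widen_prefix:
  assumes "k \<le> length lam"
  shows "part (map Suc (take k lam) @ drop k lam) x = part lam x + of_bool (1 \<le> x \<and> x \<le> k)"
  using assms unfolding part_def by (auto simp: nth_append min_def)

lemma add_node_widen_prefix:
  assumes "k < length lam"
  shows "add_node (map Suc (take k lam) @ drop k lam) (Suc k) = map Suc (take (Suc k) lam) @ drop (Suc k) lam"
  using assms unfolding add_node_def
  by (auto simp add: nth_append list_update_append take_Suc_conv_app_nth min_def
      simp flip: Cons_nth_drop_Suc)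

lemma cogood_widen_prefix:
  assumes ends: "row_ends_residue i lam" and add: "addable_i i lam (Suc k)"
  shows "cogood i (map Suc (take k lam) @ drop k lam) (Suc k)"
proof -
  let ?nu = "map Suc (take k lam) @ drop k lam"
  have k: "k \<le> length lam"
    using add unfolding addable_i_def addable_def by simp
  note part_nu = part_widen_prefix[OF k]
  have "addable_i i ?nu (Suc k)"
    using add k unfolding addable_i_def addable_def by (auto simp: part_nu)
  moreover have "\<not> removable_i i ?nu c" if "Suc k < c" for c
  proof
    assume "removable_i i ?nu c"
    then have "c \<le> length lam" "res c (part lam c) = i"
      using that unfolding removable_i_def removable_def by (auto simp: part_nu)
    then show False
      using ends that res_Suc_neq[of c "part lam c"] unfolding row_ends_residue_def by auto
  qed
  moreover have "Suc k \<le> b" if "addable_i i ?nu b" for b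
  proof (rule ccontr)
    assume "\<not> Suc k \<le> b"
    moreover have "1 \<le> b" "res b (part ?nu b + 1) = i"
      using that unfolding addable_i_def addable_def by auto
    ultimately show False
      using ends k res_Suc_neq[of b "Suc (part lam b)"] unfolding row_ends_residue_def
      by (simp add: part_nu)
  qed
  ultimately show ?thesis
    unfolding cogood_def conormal_def by blast
qed

lemma ftil_cogood: "cogood i lam b \<Longrightarrow> ftil i lam = Some (add_node lam b)"
proof -
  assume b: "cogood i lam b"
  have "(THE b. cogood i lam b) = b"
    by (rule the_equality[of "cogood i lam", OF b]) (use b in \<open>auto simp: cogood_def intro: antisym\<close>)
  with b show ?thesis
    unfolding ftil_def by auto
qed

lemma fpow_widen_prefix:
  assumes "alternating lam" "k \<le> length lam"
  shows "fpow (end_residue lam) k lam = Some (map Suc (take k lam) @ drop k lam)"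
  using assms(2)
proof (induction k)
  case (Suc k)
  then show ?case
    using ftil_cogood[OF cogood_widen_prefix[OF alternating_row_ends_residue alternating_addable_i]]
      add_node_widen_prefix assms(1) by simp
qed simp

lemma fpow_widening:
  "alternating lam \<Longrightarrow> fpow (end_residue lam) (length lam) lam = Some (map Suc lam)"
  using fpow_widen_prefix[of lam "length lam"] by simp

lemma fpow_deepening:
  assumes "alternating lam" "addable_i (end_residue lam) lam (Suc (length lam))"
  shows "fpow (end_residue lam) (Suc (length lam)) lam = Some (map Suc lam @ [1])"
  using fpow_widen_prefix[OF assms(1) order_refl]
    ftil_cogood[OF cogood_widen_prefix[OF alternating_row_ends_residue[OF assms(1)] assms(2)]]
  by (simp add: add_node_def)

definition row_nres :: "nat \<Rightarrow> nat \<Rightarrow> nat \<Rightarrow> nat" where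
  "row_nres i x p = card {y. 1 \<le> y \<and> y \<le> p \<and> res x y = i}"

lemma row_nres_0 [simp]: "row_nres i x 0 = 0"
  unfolding row_nres_def by simp

lemma row_nres_Suc: "row_nres i x (Suc p) = row_nres i x p + of_bool (res x (Suc p) = i)"
proof -
  have "{y. 1 \<le> y \<and> y \<le> Suc p \<and> res x y = i} =
      {y. 1 \<le> y \<and> y \<le> p \<and> res x y = i} \<union> (if res x (Suc p) = i then {Suc p} else {})"
    by (auto simp: le_Suc_eq)
  moreover have "finite {y. 1 \<le> y \<and> y \<le> p \<and> res x y = i}"
    by (rule finite_subset[of _ "{..p}"]) auto
  ultimately show ?thesis
    unfolding row_nres_def by auto
qed

lemma row_nres_diff:
  "res x (Suc p) = i \<Longrightarrow> int (row_nres (1 - i) x p) - int (row_nres i x p) = of_bool (odd p)"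
proof (induction p arbitrary: i)
  case (Suc p)
  then have "res x (Suc p) = 1 - i" "1 - (1 - i) = i" "1 - i \<noteq> i"
    using res_Suc[of x "Suc p"] unfolding res_eq by presburger+
  then show ?case
    using Suc.IH[of "1 - i"] by (cases "odd p") (simp_all add: row_nres_Suc)
qed simp

lemma part_snoc: "part (lam @ [p]) x = (if x = Suc (length lam) then p else part lam x)"
  unfolding part_def by (auto simp: nth_append)

lemma nres_Nil: "nres i [] = 0"
  unfolding nres_def by (rule card_eq_0_iff[THEN iffD2]) auto

lemma nres_snoc: "nres i (lam @ [p]) = nres i lam + row_nres i (Suc (length lam)) p"
proof -
  let ?row = "{y. 1 \<le> y \<and> y \<le> p \<and> res (Suc (length lam)) y = i}"
  let ?N = "\<lambda>lam. {(x, y). 1 \<le> x \<and> x \<le> length lam \<and> 1 \<le> y \<and> y \<le> part lam x \<and> res x y = i}"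
  have split: "?N (lam @ [p]) = ?N lam \<union> Pair (Suc (length lam)) ` ?row"
    by (auto simp: part_snoc le_Suc_eq)
  have "finite (?N lam)"
    by (rule finite_subset[of _ "{..length lam} \<times> {..sum_list lam}"])
      (auto simp: part_def intro: le_trans[OF _ elem_le_sum_list])
  moreover have "finite ?row"
    by (rule finite_subset[of _ "{..p}"]) auto
  moreover have "?N lam \<inter> Pair (Suc (length lam)) ` ?row = {}"
    by auto
  ultimately show ?thesis
    unfolding nres_def row_nres_def split
    by (simp add: card_Un_disjoint card_image inj_on_def)
qed

lemma nres_diff_odd_parts:
  "row_ends_residue i lam \<Longrightarrow> int (nres (1 - i) lam) - int (nres i lam) = int (length (filter odd lam))"
proof (induction lam rule: rev_induct)
  case Nil
  then show ?case by (simp add: nres_Nil)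
next
  case (snoc p lam)
  have ends: "res x (part (lam @ [p]) x + 1) = i" if "1 \<le> x" "x \<le> Suc (length lam)" for x
    using snoc.prems that unfolding row_ends_residue_def by simp
  have "row_ends_residue i lam"
    unfolding row_ends_residue_def
  proof (intro allI impI)
    fix x assume "1 \<le> x" "x \<le> length lam"
    then show "res x (part lam x + 1) = i"
      using ends[of x] by (simp add: part_snoc)
  qed
  moreover have "res (Suc (length lam)) (Suc p) = i"
    using ends[of "Suc (length lam)"] by (simp add: part_snoc)
  ultimately show ?case
    using snoc.IH row_nres_diff[of "Suc (length lam)" p i] by (cases "odd p") (simp_all add: nres_snoc)
qed

lemma length_filter_odd:
  "(\<forall>j<length xs. odd (xs ! j) \<longleftrightarrow> odd (a + j)) \<Longrightarrow> length (filter odd xs) = (length xs + a mod 2) div 2"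
proof (induction xs arbitrary: a)
  case (Cons p xs)
  have "odd p \<longleftrightarrow> odd a"
    using Cons.prems by force
  moreover have "length (filter odd xs) = (length xs + Suc a mod 2) div 2"
    using Cons.prems by (intro Cons.IH) auto
  ultimately show ?case
    by simp presburger
qed simp

lemma hval_deepening:
  assumes "alternating lam" "addable_i (end_residue lam) lam (Suc (length lam))"
  shows "hval (end_residue lam) lam = int (Suc (length lam))"
proof -
  let ?e = "end_residue lam"
  have e: "?e = length lam mod 2"
    using assms(2) unfolding addable_i_def part_def res_eq by simp
  have "length (filter odd lam) = (length lam + ?e) div 2"
  proof (cases lam)
    case (Cons p lam')
    then show ?thesis
      using length_filter_odd[of lam "lam ! 0"] alternating_parity[OF assms(1)]
      unfolding end_residue_def part_def res_eq by simp
  qed (use end_residue_cases[of "[]"] in auto)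
  then have diff: "int (nres (1 - ?e) lam) - int (nres ?e lam) = int ((length lam + ?e) div 2)"
    using nres_diff_odd_parts[OF alternating_row_ends_residue[OF assms(1)]] by simp
  show ?thesis
  proof (cases "even (length lam)")
    case True
    then obtain m where "length lam = 2 * m" "?e = 0"
      using e by auto
    with diff show ?thesis
      unfolding hval_def by simp
  next
    case False
    then obtain m where "length lam = 2 * m + 1" "?e = 1"
      using e oddE by fastforce
    with diff show ?thesis
      unfolding hval_def by simp
  qed
qed

lemma sref_deepening:
  assumes "alternating lam" "addable_i (end_residue lam) lam (Suc (length lam))"
  shows "sref (end_residue lam) lam = Some (map Suc lam @ [1])"
  using fpow_deepening[OF assms] unfolding sref_def Let_def hval_deepening[OF assms] nat_int by simp

lemma addable_i_new_row:
  assumes "alternating lam" "lam \<noteq> [] \<Longrightarrow> odd (last lam)"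
  shows "addable_i (end_residue lam) lam (Suc (length lam))"
proof (cases "lam = []")
  case True
  then show ?thesis
    unfolding addable_i_def addable_def end_residue_def part_def by simp
next
  case False
  let ?b = "length lam"
  have "0 < lam ! (?b - 1)"
    using assms(1) False unfolding alternating_iff by simp
  then have "addable lam (Suc ?b)"
    using False unfolding addable_def part_def by (simp add: Suc_le_eq)
  moreover have "res ?b (part lam ?b + 1) = end_residue lam"
    using alternating_row_ends_residue[OF assms(1)] False unfolding row_ends_residue_def
    by (simp add: Suc_le_eq)
  moreover have "odd (lam ! (?b - 1))"
    using assms(2) False by (simp add: last_conv_nth)
  ultimately show ?thesis
    using False unfolding addable_i_def by (simp add: part_def res_eq Suc_le_eq) presburger
qed

lemma alternating_snocD:
  assumes "alternating (lam @ [q])"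
  shows "alternating lam" "0 < q" "\<forall>p\<in>set lam. q < p" "lam \<noteq> [] \<Longrightarrow> odd (last lam) \<noteq> odd q"
proof -
  show "alternating lam"
    using alternating_butlast[OF assms] by simp
  show "0 < q" "\<forall>p\<in>set lam. q < p"
    using assms unfolding alternating_iff sorted_wrt_append by auto
  show "odd (last lam) \<noteq> odd q" if "lam \<noteq> []"
    using assms that unfolding alternating_iff
    by (auto simp: last_conv_nth nth_append dest!: spec[of _ "length lam - 1"])
qed

lemma map_Suc_pred: "\<forall>p\<in>set lam. 0 < p \<Longrightarrow> map Suc (map (\<lambda>p. p - 1) lam) = lam"
  by (induction lam) auto

lemma alternating_decompose:
  assumes "alternating lam" "lam \<noteq> []"
  obtains (widen) mu where "alternating mu" "lam = map Suc mu"
  | (deepen) mu where "alternating mu" "addable_i (end_residue mu) mu (Suc (length mu))"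
      "lam = map Suc mu @ [1]"
proof -
  obtain lam' q where lam: "lam = lam' @ [q]"
    using assms(2) rev_exhaust by blast
  note snoc = alternating_snocD[OF assms(1)[unfolded lam]]
  show thesis
  proof (cases "q = 1")
    case False
    then have ge2: "\<forall>p\<in>set lam. 2 \<le> p"
      using snoc(2,3) lam by fastforce
    then have "lam = map Suc (map (\<lambda>p. p - 1) lam)"
      using map_Suc_pred[of lam] by fastforce
    then show thesis
      using widen alternating_map_pred[OF assms(1) ge2] by blast
  next
    case True
    let ?mu = "map (\<lambda>p. p - 1) lam'"
    have ge2: "\<forall>p\<in>set lam'. 2 \<le> p"
      using snoc(3) True by auto
    then have "alternating ?mu"
      using alternating_map_pred[OF snoc(1)] by blast
    moreover have "odd (last ?mu)" if "?mu \<noteq> []"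
      using that snoc(4) True ge2 last_in_set[of lam'] by (fastforce simp: last_map)
    moreover have "lam = map Suc ?mu @ [1]"
      using map_Suc_pred[of lam'] ge2 lam True by fastforce
    ultimately show thesis
      using deepen[of ?mu] addable_i_new_row[of ?mu] by blast
  qed
qed

theorem mainTheorem3:
  fixes lam :: "nat list"
  assumes "alternating lam"
  shows "alt_step\<^sup>*\<^sup>* [] lam"
  using assms
proof (induction "sum_list lam" arbitrary: lam rule: less_induct)
  case less
  show ?case
  proof (cases "lam = []")
    case False
    with less.prems show ?thesis
    proof (cases rule: alternating_decompose)
      case (widen mu)
      then have step: "alt_step mu lam" and smaller: "sum_list mu < sum_list lam"
        using less.prems False fpow_widening[of mu] end_residue_cases[of mu]
        by (auto simp: alt_step_def sum_list_Suc)
      show ?thesis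
        using less.hyps[OF smaller widen(1)] step by (rule rtranclp.rtrancl_into_rtrancl)
    next
      case (deepen mu)
      then have step: "alt_step mu lam" and smaller: "sum_list mu < sum_list lam"
        using less.prems sref_deepening[of mu] end_residue_cases[of mu]
        by (auto simp: alt_step_def sum_list_Suc)
      show ?thesis
        using less.hyps[OF smaller deepen(1)] step by (rule rtranclp.rtrancl_into_rtrancl)
    qed
  qed simp
qed

end
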